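(* Let $d\ge3$, $\gamma\in\mathcal{P}_{\mathcal{W}_d}$, and let $(\beta_n)$ be probability measures on $\mathcal{B}([0,\infty))$ with $\beta_n(\{0\})=0$ for all $n$ (not necessarily in $\mathcal{P}_{\mathcal{W}_d}$), converging weakly to $\gamma$. Then there is a sequence $(a_n)$ in $(0,\infty)$ converging to $1$ such that each push-forward $\gamma_n:=\beta_n^{T_{a_n}}$ belongs to $\mathcal{P}_{\mathcal{W}_d}$ and $(\gamma_n)$ converges weakly to $\gamma$ on $[0,\infty)$.
   Context: $\mathcal{P}_{\mathcal{W}_d}$ is the set of probability measures $\gamma$ on $\mathcal{B}([0,\infty))$ with $\gamma(\{0\})=0$ and $\int_{[0,1]}(1-t)^{d-1}\,d\gamma(t)=1/2$. For $a\in(0,\infty)$, $T_a(x)=ax$, and $\beta^{T_a}=\beta\circ T_a^{-1}$ denotes the push-forward of $\beta$ under $T_a$. *)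

theory Defs
  imports "HOL-Probability.Probability"
begin

definition prob_nonneg :: "real measure \<Rightarrow> bool" where
  "prob_nonneg M \<longleftrightarrow> prob_space M \<and> sets M = sets (restrict_space borel {0::real..})"

definition PWd :: "nat \<Rightarrow> real measure \<Rightarrow> bool" where
  "PWd d M \<longleftrightarrow> prob_nonneg M \<and> measure M {0} = 0 \<and>
     (LINT t:{0..1}|M. (1 - t) ^ (d - 1)) = 1 / 2"

definition pushT :: "real \<Rightarrow> real measure \<Rightarrow> real measure" where
  "pushT a M = distr M (restrict_space borel {0::real..}) (\<lambda>x. a * x)"

definition weak_conv_nonneg :: "(nat \<Rightarrow> real measure) \<Rightarrow> real measure \<Rightarrow> bool" where
  "weak_conv_nonneg Ms M \<longleftrightarrow>
     (\<forall>f::real \<Rightarrow> real. continuous_on {0..} f \<and> bounded (f ` {0..}) \<longrightarrow>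
        (\<lambda>n. \<integral>x. f x \<partial>(Ms n)) \<longlonglongrightarrow> (\<integral>x. f x \<partial>M))"

end

theory Submission
  imports Defs
begin

(* On [0,\<infinity>) the function g t = ((1 - t)\<^sup>+)\<^sup>k, k = d - 1 (cutoff_pow k), agrees with
   indicator [0,1] t * (1 - t)\<^sup>k but is bounded and continuous on all of \<real>; so a measure
   \<mu> with \<mu>{0} = 0 lies in P_{W_d} iff \<integral> g d\<mu> = 1/2, and \<beta>\<^sup>T\<^sup>a lies in P_{W_d} iff
   \<Phi>(a) = 1/2 for \<Phi>(c) = \<integral> g(c x) d\<beta>(x) (scaled_mass k \<beta> c).
   Each \<Phi>_n is continuous and nonincreasing, \<Phi>_n(0) = 1 and \<Phi>_n(c) \<rightarrow> 0 as c \<rightarrow> \<infinity>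
   because \<beta>_n{0} = 0, so a root a_n > 0 exists.  Weak convergence gives \<Phi>_n \<rightarrow> \<Psi> pointwise,
   where \<Psi> is the same function for \<gamma>; since \<Psi>(1) = 1/2 and \<Psi> is strictly decreasing
   where it is positive, the roots a_n are squeezed to 1.  Finally, for a_n \<rightarrow> 1 the
   integrals \<integral> f(a_n x) d\<beta>_n(x) converge to \<integral> f d\<gamma> by Skorohod's representation and
   dominated convergence. *)

definition cutoff_pow :: "nat \<Rightarrow> real \<Rightarrow> real" where
  "cutoff_pow k x = (max 0 (1 - max 0 x)) ^ k"

lemma isCont_cutoff_pow: "isCont (cutoff_pow k) x"
  unfolding cutoff_pow_def by (intro continuous_intros)

lemma borel_measurable_cutoff_pow [measurable]: "cutoff_pow k \<in> borel_measurable borel"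
  unfolding cutoff_pow_def by measurable

lemma abs_cutoff_pow_le_1: "\<bar>cutoff_pow k x\<bar> \<le> 1"
  unfolding cutoff_pow_def by (auto intro!: power_le_one)

lemma cutoff_pow_0 [simp]: "cutoff_pow k 0 = 1"
  unfolding cutoff_pow_def by simp

lemma cutoff_pow_eq_0: "1 \<le> k \<Longrightarrow> 1 \<le> x \<Longrightarrow> cutoff_pow k x = 0"
  unfolding cutoff_pow_def by simp

lemma cutoff_pow_antimono: "x \<le> y \<Longrightarrow> cutoff_pow k y \<le> cutoff_pow k x"
  unfolding cutoff_pow_def by (intro power_mono) auto

lemma cutoff_pow_strict_antimono:
  assumes "1 \<le> k" "0 \<le> s" "s < t" "s < 1"
  shows "cutoff_pow k t < cutoff_pow k s"
proof (cases "t < 1")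
  case True
  then show ?thesis
    using assms by (simp add: cutoff_pow_def power_strict_mono)
next
  case False
  then show ?thesis
    using assms by (simp add: cutoff_pow_eq_0) (simp add: cutoff_pow_def)
qed

lemma cutoff_pow_eq_indicator:
  "1 \<le> k \<Longrightarrow> 0 \<le> t \<Longrightarrow> cutoff_pow k t = indicator {0..1} t * (1 - t) ^ k"
  unfolding cutoff_pow_def by (cases "t \<le> 1") (auto simp: indicator_def)

lemma sets_prob_nonneg: "prob_nonneg M \<Longrightarrow> sets M = sets (restrict_space borel {0::real..})"
  unfolding prob_nonneg_def by simp

lemma space_prob_nonneg: "prob_nonneg M \<Longrightarrow> space M = {0::real..}"
  using sets_eq_imp_space_eq[OF sets_prob_nonneg] by (simp add: space_restrict_space)

lemma prob_space_prob_nonneg: "prob_nonneg M \<Longrightarrow> prob_space M"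
  unfolding prob_nonneg_def by simp

lemma borel_measurable_prob_nonneg:
  "prob_nonneg M \<Longrightarrow> f \<in> borel_measurable borel \<Longrightarrow> f \<in> borel_measurable M"
  by (simp add: measurable_cong_sets[OF sets_prob_nonneg refl] measurable_restrict_space1)

lemma measurable_scale_prob_nonneg:
  assumes "prob_nonneg M" "0 \<le> a"
  shows "(\<lambda>x. a * x) \<in> M \<rightarrow>\<^sub>M restrict_space borel {0::real..}"
proof -
  have "(\<lambda>x. a * x) \<in> restrict_space borel {0::real..} \<rightarrow>\<^sub>M restrict_space borel {0::real..}"
    using assms(2) by (intro measurable_restrict_space3) auto
  then show ?thesis
    by (simp add: measurable_cong_sets[OF sets_prob_nonneg[OF assms(1)] refl])
qed

lemma AE_pos_prob_nonneg:
  assumes "prob_nonneg M" "measure M {0} = 0"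
  shows "AE x in M. 0 < x"
proof -
  interpret prob_space M using prob_space_prob_nonneg[OF assms(1)] .
  have "{0} \<in> sets M" by (simp add: sets_prob_nonneg[OF assms(1)] sets_restrict_space_iff)
  then have "{0} \<in> null_sets M" using assms(2) by (simp add: null_sets_def emeasure_eq_measure)
  then show ?thesis
    by (rule AE_I') (auto simp: space_prob_nonneg[OF assms(1)])
qed

lemma prob_nonneg_pushT: "prob_nonneg M \<Longrightarrow> 0 \<le> a \<Longrightarrow> prob_nonneg (pushT a M)"
  unfolding prob_nonneg_def pushT_def
  by (auto intro!: prob_space.prob_space_distr measurable_scale_prob_nonneg simp: prob_nonneg_def)

lemma measure_pushT_0:
  assumes "prob_nonneg M" "0 < a"
  shows "measure (pushT a M) {0} = measure M {0}"
proof -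
  have "{0::real} \<in> sets (restrict_space borel {0::real..})"
    by (auto simp: sets_restrict_space_iff)
  then have "measure (pushT a M) {0} = measure M ((\<lambda>x. a * x) -` {0} \<inter> space M)"
    unfolding pushT_def using assms by (intro measure_distr measurable_scale_prob_nonneg) auto
  also have "(\<lambda>x. a * x) -` {0} \<inter> space M = {0}"
    using assms by (auto simp: space_prob_nonneg)
  finally show ?thesis .
qed

lemma integral_pushT:
  fixes h :: "real \<Rightarrow> real"
  assumes "prob_nonneg M" "0 \<le> a" "h \<in> borel_measurable (restrict_space borel {0..})"
  shows "integral\<^sup>L (pushT a M) h = (\<integral>x. h (a * x) \<partial>M)"
  unfolding pushT_def using assms by (intro integral_distr measurable_scale_prob_nonneg)

definition scaled_mass :: "nat \<Rightarrow> real measure \<Rightarrow> real \<Rightarrow> real" where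
  "scaled_mass k M c = (\<integral>x. cutoff_pow k (c * x) \<partial>M)"

lemma integrable_cutoff_pow_scaled:
  assumes "prob_nonneg M"
  shows "integrable M (\<lambda>x. cutoff_pow k (c * x))"
proof -
  interpret prob_space M using prob_space_prob_nonneg[OF assms] .
  show ?thesis
    by (intro integrable_const_bound[where B=1] AE_I2 borel_measurable_prob_nonneg[OF assms])
      (simp_all add: abs_cutoff_pow_le_1)
qed

lemma scaled_mass_0: "prob_nonneg M \<Longrightarrow> scaled_mass k M 0 = 1"
  by (simp add: scaled_mass_def prob_space.prob_space prob_space_prob_nonneg)

lemma scaled_mass_pushT:
  "prob_nonneg M \<Longrightarrow> 0 \<le> a \<Longrightarrow> scaled_mass k (pushT a M) c = scaled_mass k M (c * a)"
  unfolding scaled_mass_def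
  by (subst integral_pushT) (auto intro: measurable_restrict_space1 simp: mult.assoc)

lemma PWd_iff_scaled_mass:
  assumes "1 \<le> k"
  shows "PWd (Suc k) M \<longleftrightarrow> prob_nonneg M \<and> measure M {0} = 0 \<and> scaled_mass k M 1 = 1 / 2"
proof -
  have "(LINT t:{0..1}|M. (1 - t) ^ k) = scaled_mass k M 1" if "prob_nonneg M"
    unfolding scaled_mass_def set_lebesgue_integral_def
    using assms by (intro Bochner_Integration.integral_cong)
      (auto simp: space_prob_nonneg[OF that] cutoff_pow_eq_indicator)
  then show ?thesis
    unfolding PWd_def by auto
qed

lemma PWd_pushT_iff:
  assumes "1 \<le> k" "prob_nonneg M" "measure M {0} = 0" "0 < a"
  shows "PWd (Suc k) (pushT a M) \<longleftrightarrow> scaled_mass k M a = 1 / 2"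
  using assms by (simp add: PWd_iff_scaled_mass prob_nonneg_pushT measure_pushT_0 scaled_mass_pushT)

lemma antimono_scaled_mass: "prob_nonneg M \<Longrightarrow> antimono (scaled_mass k M)"
  unfolding scaled_mass_def
  by (intro antimonoI integral_mono integrable_cutoff_pow_scaled)
    (auto simp: space_prob_nonneg intro!: cutoff_pow_antimono mult_right_mono)

lemma isCont_scaled_mass:
  assumes "prob_nonneg M"
  shows "isCont (scaled_mass k M) c"
proof (rule continuous_at_sequentiallyI)
  interpret prob_space M using prob_space_prob_nonneg[OF assms] .
  fix u assume "u \<longlonglongrightarrow> c"
  then show "(\<lambda>i. scaled_mass k M (u i)) \<longlonglongrightarrow> scaled_mass k M c"
    unfolding scaled_mass_def
    by (intro integral_dominated_convergence[where w="\<lambda>_. 1"] AE_I2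
        isCont_tendsto_compose[OF isCont_cutoff_pow] tendsto_mult tendsto_const
        borel_measurable_prob_nonneg[OF assms])
      (simp_all add: abs_cutoff_pow_le_1)
qed

lemma scaled_mass_tendsto_0:
  assumes "prob_nonneg M" "measure M {0} = 0" "1 \<le> k"
  shows "(\<lambda>j. scaled_mass k M (real j)) \<longlonglongrightarrow> 0"
proof -
  interpret prob_space M using prob_space_prob_nonneg[OF assms(1)] .
  have "(\<lambda>j. cutoff_pow k (real j * x)) \<longlonglongrightarrow> 0" if "0 < x" for x
  proof (rule tendsto_eventually, rule eventually_sequentiallyI)
    fix j assume "nat \<lceil>1 / x\<rceil> \<le> j"
    then have "1 \<le> real j * x" using that by (simp add: field_simps)
    then show "cutoff_pow k (real j * x) = 0" by (rule cutoff_pow_eq_0[OF assms(3)])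
  qed
  then have "(\<lambda>j. scaled_mass k M (real j)) \<longlonglongrightarrow> (\<integral>x. 0 \<partial>M)"
    unfolding scaled_mass_def
    using AE_pos_prob_nonneg[OF assms(1,2)]
    by (intro integral_dominated_convergence[where w="\<lambda>_. 1"]
        borel_measurable_prob_nonneg[OF assms(1)]) (auto simp: abs_cutoff_pow_le_1)
  then show ?thesis by simp
qed

lemma scaled_mass_attains:
  assumes "prob_nonneg M" "measure M {0} = 0" "1 \<le> k" "0 < y" "y < 1"
  shows "\<exists>c>0. scaled_mass k M c = y"
proof -
  obtain j where j: "scaled_mass k M (real j) < y"
    using order_tendstoD(2)[OF scaled_mass_tendsto_0[OF assms(1-3)] assms(4)]
    by (auto simp: eventually_sequentially)
  have at_0: "scaled_mass k M 0 = 1" using assms(1) by (rule scaled_mass_0)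
  obtain c where "0 \<le> c" "scaled_mass k M c = y"
    using IVT2[of "scaled_mass k M" "real j" y 0] j at_0 assms(5)
      isCont_scaled_mass[OF assms(1)] by fastforce
  moreover from this have "c \<noteq> 0" using at_0 assms(5) by auto
  ultimately show ?thesis by (intro exI[of _ c]) auto
qed

lemma scaled_mass_strict_antimono:
  assumes M: "prob_nonneg M" "measure M {0} = 0" and k: "1 \<le> k"
    and cb: "0 < c" "c < b" and pos: "0 < scaled_mass k M c"
  shows "scaled_mass k M b < scaled_mass k M c"
proof (rule ccontr)
  interpret prob_space M using prob_space_prob_nonneg[OF M(1)] .
  assume "\<not> ?thesis"
  moreover have "scaled_mass k M b \<le> scaled_mass k M c"
    using antimonoD[OF antimono_scaled_mass[OF M(1)]] cb by simp
  ultimately have "scaled_mass k M b = scaled_mass k M c" by simp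
  moreover have "cutoff_pow k (b * x) \<le> cutoff_pow k (c * x)" if "x \<in> space M" for x
    using that cb by (intro cutoff_pow_antimono mult_right_mono) (auto simp: space_prob_nonneg[OF M(1)])
  ultimately have "AE x in M. cutoff_pow k (b * x) = cutoff_pow k (c * x)"
    unfolding scaled_mass_def
    by (intro integral_eq_mono_AE_eq_AE integrable_cutoff_pow_scaled M AE_I2) auto
  then have "AE x in M. cutoff_pow k (c * x) = 0"
    using AE_pos_prob_nonneg[OF M]
  proof eventually_elim
    case (elim x)
    show ?case
    proof (rule ccontr)
      assume "cutoff_pow k (c * x) \<noteq> 0"
      then have "c * x < 1" using cutoff_pow_eq_0[OF k, of "c * x"] by linarith
      then have "cutoff_pow k (b * x) < cutoff_pow k (c * x)"
        using elim cb by (intro cutoff_pow_strict_antimono[OF k]) auto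
      with elim show False by simp
    qed
  qed
  then have "scaled_mass k M c = 0"
    unfolding scaled_mass_def by (rule integral_eq_zero_AE)
  with pos show False by simp
qed

lemma antimono_roots_tendsto:
  fixes \<Phi> :: "nat \<Rightarrow> real \<Rightarrow> real" and \<Psi> :: "real \<Rightarrow> real"
  assumes anti: "\<And>n. antimono (\<Phi> n)"
    and lim: "\<And>c. (\<lambda>n. \<Phi> n c) \<longlonglongrightarrow> \<Psi> c"
    and below: "\<And>c. l < c \<Longrightarrow> c < c\<^sub>0 \<Longrightarrow> y < \<Psi> c"
    and above: "\<And>c. c\<^sub>0 < c \<Longrightarrow> \<Psi> c < y"
    and root: "\<And>n. \<Phi> n (x n) = y"
    and "l < c\<^sub>0"
  shows "x \<longlonglongrightarrow> c\<^sub>0"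
proof (rule order_tendstoI)
  fix a assume "a < c\<^sub>0"
  define a' where "a' = max a ((l + c\<^sub>0) / 2)"
  have "l < a'" "a' < c\<^sub>0" "a \<le> a'"
    using \<open>a < c\<^sub>0\<close> \<open>l < c\<^sub>0\<close> by (simp_all add: a'_def less_max_iff_disj)
  then have "eventually (\<lambda>n. y < \<Phi> n a') sequentially"
    by (intro order_tendstoD(1)[OF lim] below)
  then show "eventually (\<lambda>n. a < x n) sequentially"
  proof eventually_elim
    case (elim n)
    then have "a' < x n"
      using antimonoD[OF anti, of "x n" a' n] root[of n] by (cases "x n \<le> a'") auto
    then show ?case using \<open>a \<le> a'\<close> by simp
  qed
next
  fix b assume "c\<^sub>0 < b"
  then have "eventually (\<lambda>n. \<Phi> n b < y) sequentially"
    by (intro order_tendstoD(2)[OF lim] above)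
  then show "eventually (\<lambda>n. x n < b) sequentially"
  proof eventually_elim
    case (elim n)
    then show ?case
      using antimonoD[OF anti, of b "x n" n] root[of n] by (cases "b \<le> x n") auto
  qed
qed

lemma measurable_id_prob_nonneg: "prob_nonneg M \<Longrightarrow> (\<lambda>x. x) \<in> M \<rightarrow>\<^sub>M borel"
  using borel_measurable_prob_nonneg[of M "\<lambda>x. x"] by simp

lemma real_distribution_prob_nonneg:
  "prob_nonneg M \<Longrightarrow> real_distribution (distr M borel (\<lambda>x. x))"
  unfolding real_distribution_def real_distribution_axioms_def
  by (simp add: prob_space.prob_space_distr prob_space_prob_nonneg measurable_id_prob_nonneg)

lemma integral_distr_borel_prob_nonneg:
  fixes f :: "real \<Rightarrow> real"
  assumes "prob_nonneg M" "f \<in> borel_measurable borel"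
  shows "integral\<^sup>L (distr M borel (\<lambda>x. x)) f = integral\<^sup>L M f"
  using integral_distr[OF measurable_id_prob_nonneg[OF assms(1)] assms(2)] by simp

lemma weak_conv_m_of_weak_conv_nonneg:
  assumes \<beta>: "\<And>n. prob_nonneg (\<beta> n)" and \<gamma>: "prob_nonneg \<gamma>"
    and wc: "weak_conv_nonneg \<beta> \<gamma>"
  shows "weak_conv_m (\<lambda>n. distr (\<beta> n) borel (\<lambda>x. x)) (distr \<gamma> borel (\<lambda>x. x))"
proof (rule integral_bdd_continuous_conv_imp_weak_conv
    [OF real_distribution_prob_nonneg[OF \<beta>] real_distribution_prob_nonneg[OF \<gamma>]])
  fix f :: "real \<Rightarrow> real"
  assume cont: "\<And>x. isCont f x" and bdd: "\<And>x. \<bar>f x\<bar> \<le> 1"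
  have "continuous_on UNIV f" using cont by (simp add: continuous_on_eq_continuous_at)
  then have "continuous_on {0..} f" "f \<in> borel_measurable borel"
    by (auto intro: continuous_on_subset borel_measurable_continuous_onI)
  moreover have "bounded (f ` {0..})"
    using bdd unfolding bounded_iff by auto
  ultimately show "(\<lambda>n. integral\<^sup>L (distr (\<beta> n) borel (\<lambda>x. x)) f)
      \<longlonglongrightarrow> integral\<^sup>L (distr \<gamma> borel (\<lambda>x. x)) f"
    using wc by (simp add: weak_conv_nonneg_def integral_distr_borel_prob_nonneg \<beta> \<gamma>)
qed

lemma tendsto_integral_scaled_weak_conv_nonneg:
  fixes F :: "real \<Rightarrow> real"
  assumes \<beta>: "\<And>n. prob_nonneg (\<beta> n)" and \<gamma>: "prob_nonneg \<gamma>"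
    and wc: "weak_conv_nonneg \<beta> \<gamma>"
    and F_cont: "\<And>x. isCont F x" and F_bdd: "\<And>x. \<bar>F x\<bar> \<le> B"
    and a: "a \<longlonglongrightarrow> c"
  shows "(\<lambda>n. \<integral>x. F (a n * x) \<partial>\<beta> n) \<longlonglongrightarrow> (\<integral>x. F (c * x) \<partial>\<gamma>)"
proof -
  \<comment> \<open>The scale a n moves with n, so weak convergence alone does not apply; on a Skorohod
    representation the integrands converge pointwise.\<close>
  obtain \<Omega> Y_seq Y where
    "prob_space (\<Omega> :: real measure)" and
    Y_seq_measurable: "\<forall>n. Y_seq n \<in> borel_measurable \<Omega>" and
    distr_Y_seq: "\<forall>n. distr \<Omega> borel (Y_seq n) = distr (\<beta> n) borel (\<lambda>x. x)" and
    Y_measurable: "Y \<in> measurable \<Omega> lborel" and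
    distr_Y: "distr \<Omega> borel Y = distr \<gamma> borel (\<lambda>x. x)" and
    Y_seq_Y: "\<forall>w \<in> space \<Omega>. (\<lambda>n. Y_seq n w) \<longlonglongrightarrow> Y w"
    using Skorohod[OF real_distribution_prob_nonneg[OF \<beta>] real_distribution_prob_nonneg[OF \<gamma>]
        weak_conv_m_of_weak_conv_nonneg[OF \<beta> \<gamma> wc]]
    by blast
  interpret \<Omega>: prob_space \<Omega> by fact
  note [measurable] = Y_seq_measurable[rule_format] Y_measurable[simplified]
  have [measurable]: "F \<in> borel_measurable borel"
    using F_cont by (intro borel_measurable_continuous_onI continuous_at_imp_continuous_on) auto
  have "(\<integral>x. F (a n * x) \<partial>\<beta> n) = (\<integral>w. F (a n * Y_seq n w) \<partial>\<Omega>)" for n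
  proof -
    have "(\<integral>x. F (a n * x) \<partial>\<beta> n) = (\<integral>x. F (a n * x) \<partial>distr \<Omega> borel (Y_seq n))"
      by (simp add: distr_Y_seq integral_distr_borel_prob_nonneg[OF \<beta>])
    also have "\<dots> = (\<integral>w. F (a n * Y_seq n w) \<partial>\<Omega>)"
      by (rule integral_distr) measurable
    finally show ?thesis .
  qed
  moreover have "(\<integral>x. F (c * x) \<partial>\<gamma>) = (\<integral>w. F (c * Y w) \<partial>\<Omega>)"
  proof -
    have "(\<integral>x. F (c * x) \<partial>\<gamma>) = (\<integral>x. F (c * x) \<partial>distr \<Omega> borel Y)"
      by (simp add: distr_Y integral_distr_borel_prob_nonneg[OF \<gamma>])
    also have "\<dots> = (\<integral>w. F (c * Y w) \<partial>\<Omega>)"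
      by (rule integral_distr) measurable
    finally show ?thesis .
  qed
  moreover have "(\<lambda>n. \<integral>w. F (a n * Y_seq n w) \<partial>\<Omega>) \<longlonglongrightarrow> (\<integral>w. F (c * Y w) \<partial>\<Omega>)"
    by (intro integral_dominated_convergence[where w="\<lambda>_. B"] AE_I2
        isCont_tendsto_compose[OF F_cont] tendsto_mult a Y_seq_Y[rule_format]) (auto simp: F_bdd)
  ultimately show ?thesis by simp
qed

lemma weak_conv_nonneg_pushT:
  assumes \<beta>: "\<And>n. prob_nonneg (\<beta> n)" and \<gamma>: "prob_nonneg \<gamma>"
    and wc: "weak_conv_nonneg \<beta> \<gamma>"
    and a: "\<And>n. 0 \<le> a n" "a \<longlonglongrightarrow> 1"
  shows "weak_conv_nonneg (\<lambda>n. pushT (a n) (\<beta> n)) \<gamma>"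
  unfolding weak_conv_nonneg_def
proof (intro allI impI, elim conjE)
  fix f :: "real \<Rightarrow> real"
  assume f_cont: "continuous_on {0..} f" and "bounded (f ` {0..})"
  then obtain B where B: "\<And>x. 0 \<le> x \<Longrightarrow> \<bar>f x\<bar> \<le> B"
    unfolding bounded_iff by auto
  define F where "F x = f (max 0 x)" for x
  have "continuous_on UNIV F"
    unfolding F_def by (rule continuous_on_compose2[OF f_cont]) (auto intro!: continuous_intros)
  then have "isCont F x" for x
    by (simp add: continuous_on_eq_continuous_at)
  moreover have "\<bar>F x\<bar> \<le> B" for x
    using B by (simp add: F_def)
  ultimately have "(\<lambda>n. \<integral>x. F (a n * x) \<partial>\<beta> n) \<longlonglongrightarrow> (\<integral>x. F (1 * x) \<partial>\<gamma>)"
    by (rule tendsto_integral_scaled_weak_conv_nonneg[OF \<beta> \<gamma> wc _ _ a(2)])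
  moreover have "(\<integral>x. f x \<partial>pushT (a n) (\<beta> n)) = (\<integral>x. F (a n * x) \<partial>\<beta> n)" for n
    using a(1)[of n]
    by (simp add: integral_pushT \<beta> borel_measurable_continuous_on_restrict[OF f_cont])
      (intro Bochner_Integration.integral_cong, auto simp: space_prob_nonneg[OF \<beta>] F_def)
  moreover have "(\<integral>x. F (1 * x) \<partial>\<gamma>) = (\<integral>x. f x \<partial>\<gamma>)"
    by (intro Bochner_Integration.integral_cong) (auto simp: space_prob_nonneg[OF \<gamma>] F_def)
  ultimately show "(\<lambda>n. \<integral>x. f x \<partial>pushT (a n) (\<beta> n)) \<longlonglongrightarrow> (\<integral>x. f x \<partial>\<gamma>)"
    by simp
qed

theorem lemmaB1:
  fixes d :: nat and \<gamma> :: "real measure" and \<beta> :: "nat \<Rightarrow> real measure"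
  assumes "d \<ge> 3"
    and "PWd d \<gamma>"
    and "\<And>n. prob_nonneg (\<beta> n)"
    and "\<And>n. measure (\<beta> n) {0} = 0"
    and "weak_conv_nonneg \<beta> \<gamma>"
  shows "\<exists>a :: nat \<Rightarrow> real. (\<forall>n. a n > 0) \<and> a \<longlonglongrightarrow> 1 \<and>
           (\<forall>n. PWd d (pushT (a n) (\<beta> n))) \<and>
           weak_conv_nonneg (\<lambda>n. pushT (a n) (\<beta> n)) \<gamma>"
proof -
  define k where "k = d - 1"
  have k: "1 \<le> k" and d: "d = Suc k" using assms(1) by (simp_all add: k_def)
  have \<gamma>: "prob_nonneg \<gamma>" "measure \<gamma> {0} = 0" and \<gamma>_mass: "scaled_mass k \<gamma> 1 = 1 / 2"
    using assms(2) by (simp_all add: d PWd_iff_scaled_mass[OF k])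
  have "\<forall>n. \<exists>c>0. scaled_mass k (\<beta> n) c = 1 / 2"
    by (intro allI scaled_mass_attains[OF assms(3,4) k]) simp_all
  then obtain a where a_pos: "\<And>n. 0 < a n" and a_root: "\<And>n. scaled_mass k (\<beta> n) (a n) = 1 / 2"
    by metis
  have \<gamma>_anti: "antimono (scaled_mass k \<gamma>)" by (rule antimono_scaled_mass[OF \<gamma>(1)])
  have a_lim: "a \<longlonglongrightarrow> 1"
  proof (rule antimono_roots_tendsto[where \<Phi>="\<lambda>n. scaled_mass k (\<beta> n)" and l=0])
    show "(\<lambda>n. scaled_mass k (\<beta> n) c) \<longlonglongrightarrow> scaled_mass k \<gamma> c" for c
      unfolding scaled_mass_def
      by (rule tendsto_integral_scaled_weak_conv_nonneg[OF assms(3) \<gamma>(1) assms(5)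
            isCont_cutoff_pow abs_cutoff_pow_le_1 tendsto_const])
    show "1 / 2 < scaled_mass k \<gamma> c" if "0 < c" "c < 1" for c
      using scaled_mass_strict_antimono[OF \<gamma> k that] antimonoD[OF \<gamma>_anti, of c 1] that \<gamma>_mass
      by simp
    show "scaled_mass k \<gamma> c < 1 / 2" if "1 < c" for c
      using scaled_mass_strict_antimono[OF \<gamma> k _ that] \<gamma>_mass by simp
  qed (simp_all add: antimono_scaled_mass assms(3) a_root)
  moreover have "PWd d (pushT (a n) (\<beta> n))" for n
    using a_root by (simp add: d PWd_pushT_iff[OF k assms(3,4) a_pos])
  moreover have "weak_conv_nonneg (\<lambda>n. pushT (a n) (\<beta> n)) \<gamma>"
    using a_pos by (intro weak_conv_nonneg_pushT[OF assms(3) \<gamma>(1) assms(5) _ a_lim] less_imp_le)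
  ultimately show ?thesis using a_pos by blast
qed

end
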